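(* Let $\varphi:\mathbb{R}^n\to\mathbb{R}$ be of class $\mathcal{C}^{1,1}$ and let $x^0\in\mathbb{R}^n$ be such that, with $\Omega:=\{x\mid\varphi(x)\le\varphi(x^0)\}$, $\partial^2\varphi(x)$ is positive-definite for every $x\in\Omega$ (i.e. $\langle z,u\rangle>0$ for all $u\ne0$, $z\in\partial^2\varphi(x)(u)$) and $\Omega$ is bounded. Then there exists $\kappa>0$ such that for every $x\in\Omega$, $\langle z,w\rangle\ge\kappa\|w\|^2$ whenever $w\in\mathbb{R}^n$ and $z\in\partial^2\varphi(x)(w)$.
   Context: A function $\varphi:\mathbb{R}^n\to\mathbb{R}$ is of class $\mathcal{C}^{1,1}$ if it is continuously differentiable and $\nabla\varphi$ is Lipschitz continuous around every point. Regular normal cone: $\widehat N_\Omega(\bar z):=\{v\mid \limsup_{z\to\bar z,\,z\in\Omega}\langle v,z-\bar z\rangle/\|z-\bar z\|\le 0\}$; limiting normal cone $N_\Omega(\bar z)$: all $v$ with $z_k\to\bar z$, $z_k\in\Omega$, $v_k\to v$, $v_k\in\widehat N_\Omega(z_k)$. Coderivative: $D^*F(\bar x,\bar y)(v):=\{u\mid(u,-v)\in N_{\operatorname{gph}F}(\bar x,\bar y)\}$. $\partial^2\varphi(x)(u):=D^*(\nabla\varphi)(x,\nabla\varphi(x))(u)$. *)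

theory Defs
  imports "HOL-Analysis.Analysis"
begin

definition grad :: "('a::euclidean_space \<Rightarrow> real) \<Rightarrow> 'a \<Rightarrow> 'a" where
  "grad \<phi> x = (THE v. (\<phi> has_derivative (\<lambda>h. v \<bullet> h)) (at x))"

definition C11 :: "('a::euclidean_space \<Rightarrow> real) \<Rightarrow> bool" where
  "C11 \<phi> \<longleftrightarrow> (\<forall>x. (\<phi> has_derivative (\<lambda>h. grad \<phi> x \<bullet> h)) (at x))
     \<and> continuous_on UNIV (grad \<phi>)
     \<and> (\<forall>x. \<exists>e>0. \<exists>L. L-lipschitz_on (ball x e) (grad \<phi>))"

text \<open>Regular normal cone (limsup condition unfolded).\<close>
definition reg_normal_cone :: "'a::real_inner set \<Rightarrow> 'a \<Rightarrow> 'a set" where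
  "reg_normal_cone \<Omega> zb = {v. zb \<in> \<Omega> \<and>
     (\<forall>\<epsilon>>0. \<exists>\<delta>>0. \<forall>z\<in>\<Omega>. 0 < norm (z - zb) \<and> norm (z - zb) < \<delta> \<longrightarrow>
        v \<bullet> (z - zb) \<le> \<epsilon> * norm (z - zb))}"

definition lim_normal_cone :: "'a::real_inner set \<Rightarrow> 'a \<Rightarrow> 'a set" where
  "lim_normal_cone \<Omega> zb = {v. \<exists>z vs. z \<longlonglongrightarrow> zb \<and> (\<forall>k. z k \<in> \<Omega>) \<and> vs \<longlonglongrightarrow> v
      \<and> (\<forall>k. vs k \<in> reg_normal_cone \<Omega> (z k))}"

definition graph :: "('a \<Rightarrow> 'b set) \<Rightarrow> ('a \<times> 'b) set" where
  "graph F = {(x, y). y \<in> F x}"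

definition coderiv :: "('a::real_inner \<Rightarrow> 'b::real_inner set) \<Rightarrow> 'a \<Rightarrow> 'b \<Rightarrow> 'b \<Rightarrow> 'a set" where
  "coderiv F xb yb v = {u. (u, - v) \<in> lim_normal_cone (graph F) (xb, yb)}"

definition second_subdiff :: "('a::euclidean_space \<Rightarrow> real) \<Rightarrow> 'a \<Rightarrow> 'a \<Rightarrow> 'a set" where
  "second_subdiff \<phi> x u = coderiv (\<lambda>y. {grad \<phi> y}) x (grad \<phi> x) u"

end

theory Submission
  imports Defs
begin

(*
  The second-order subdifferential is positively homogeneous in the direction (normal cones
  are cones), it satisfies ||z|| <= L ||w|| for every Lipschitz constant L of grad phi near x
  (a regular normal (a, b) to the graph of an L-Lipschitz map has ||a|| <= L ||b||), and its
  graph is closed (limiting normals are stable under limits, by a diagonal argument).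
  Since Omega is compact and grad phi is Lipschitz on a neighbourhood of Omega, the triples
  (x, z, w) with x in Omega, ||w|| = 1 and z in the second subdifferential at x in direction w
  form a compact set.  The continuous function <z, w> is positive on it, hence bounded below
  by some kappa > 0, and homogeneity turns this into <z, w> >= kappa ||w||^2.
*)

lemma lipschitz_on_neighbourhood_of_compact:
  fixes f :: "'a::{real_normed_vector, heine_borel} \<Rightarrow> 'b::metric_space"
  assumes "compact K" and local: "\<And>x. \<exists>e>0. \<exists>L. L-lipschitz_on (ball x e) f"
  obtains U L where "open U" "K \<subseteq> U" "L-lipschitz_on U f"
proof -
  define W where "W = (\<Union>x\<in>K. \<Union>y\<in>cball 0 1. {x + y})"
  have "compact W"
    unfolding W_def using compact_sums'[OF \<open>compact K\<close> compact_cball] .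
  have "local_lipschitz {0::real} W (\<lambda>_. f)"
  proof (rule local_lipschitzI)
    fix x
    obtain e L where "e > 0" "L-lipschitz_on (ball x e) f"
      using local by blast
    moreover have "cball x (e / 2) \<inter> W \<subseteq> ball x e"
      using \<open>e > 0\<close> by auto
    ultimately show "\<exists>u>0. \<exists>L. \<forall>s\<in>cball t u \<inter> {0}. L-lipschitz_on (cball x u \<inter> W) f" for t
      by (intro exI[of _ "e / 2"] exI[of _ L]) (auto intro: lipschitz_on_subset)
  qed
  then obtain L where "L-lipschitz_on W f"
    using local_lipschitz_compact_implies_lipschitz[OF _ \<open>compact W\<close> compact_sing] by auto
  define U where "U = (\<Union>x\<in>K. ball x 1)"
  have "U \<subseteq> W"
  proof
    fix z
    assume "z \<in> U"
    then obtain x where "x \<in> K" "dist x z < 1"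
      by (auto simp: U_def)
    then have "z - x \<in> cball 0 1" "z = x + (z - x)"
      by (auto simp: dist_norm norm_minus_commute)
    then show "z \<in> W"
      unfolding W_def using \<open>x \<in> K\<close> by blast
  qed
  moreover have "open U" "K \<subseteq> U"
    by (auto simp: U_def)
  ultimately show ?thesis
    using that lipschitz_on_subset[OF \<open>L-lipschitz_on W f\<close>] by blast
qed

lemma compact_positive_lower_bound:
  fixes f :: "'a::topological_space \<Rightarrow> real"
  assumes "compact K" "continuous_on K f" "\<And>p. p \<in> K \<Longrightarrow> f p > 0"
  obtains \<kappa> where "\<kappa> > 0" "\<And>p. p \<in> K \<Longrightarrow> \<kappa> \<le> f p"
proof (cases "K = {}")
  case True
  then show ?thesis
    using that[of 1] by simp
next
  case False
  then obtain p0 where "p0 \<in> K" "\<forall>p\<in>K. f p0 \<le> f p"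
    using continuous_attains_inf[OF assms(1) _ assms(2)] by blast
  then show ?thesis
    using that[of "f p0"] assms(3) by blast
qed

lemma reg_normal_cone_scaleR:
  assumes "v \<in> reg_normal_cone S p" "c > 0"
  shows "c *\<^sub>R v \<in> reg_normal_cone S p"
proof -
  have "\<exists>\<delta>>0. \<forall>z\<in>S. 0 < norm (z - p) \<and> norm (z - p) < \<delta> \<longrightarrow>
      (c *\<^sub>R v) \<bullet> (z - p) \<le> \<epsilon> * norm (z - p)" if "\<epsilon> > 0" for \<epsilon>
  proof -
    have "\<epsilon> / c > 0"
      using \<open>\<epsilon> > 0\<close> \<open>c > 0\<close> by simp
    then obtain \<delta> where "\<delta> > 0" and \<delta>: "\<forall>z\<in>S. 0 < norm (z - p) \<and> norm (z - p) < \<delta> \<longrightarrow>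
        v \<bullet> (z - p) \<le> \<epsilon> / c * norm (z - p)"
      using assms(1) unfolding reg_normal_cone_def by blast
    have "(c *\<^sub>R v) \<bullet> (z - p) \<le> \<epsilon> * norm (z - p)"
      if "v \<bullet> (z - p) \<le> \<epsilon> / c * norm (z - p)" for z
      using that \<open>c > 0\<close> by (simp add: field_simps)
    then show ?thesis
      using \<open>\<delta> > 0\<close> \<delta> by blast
  qed
  then show ?thesis
    using assms(1) unfolding reg_normal_cone_def by simp
qed

lemma lim_normal_cone_scaleR:
  assumes "v \<in> lim_normal_cone S p" "c > 0"
  shows "c *\<^sub>R v \<in> lim_normal_cone S p"
proof -
  obtain z vs where "z \<longlonglongrightarrow> p" "\<forall>k. z k \<in> S" and vs: "vs \<longlonglongrightarrow> v"
    and "\<forall>k. vs k \<in> reg_normal_cone S (z k)"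
    using assms(1) unfolding lim_normal_cone_def by blast
  moreover have "(\<lambda>k. c *\<^sub>R vs k) \<longlonglongrightarrow> c *\<^sub>R v"
    using vs by (rule tendsto_scaleR[OF tendsto_const])
  ultimately show ?thesis
    unfolding lim_normal_cone_def using reg_normal_cone_scaleR \<open>c > 0\<close> by blast
qed

lemma lim_normal_cone_closed_graph:
  assumes "p \<longlonglongrightarrow> p0" "v \<longlonglongrightarrow> v0" "\<And>k. v k \<in> lim_normal_cone S (p k)"
  shows "v0 \<in> lim_normal_cone S p0"
proof -
  have approx: "\<exists>q u. q \<in> S \<and> u \<in> reg_normal_cone S q
      \<and> norm (q - p k) < 1 / real (Suc k) \<and> norm (u - v k) < 1 / real (Suc k)" for k
  proof -
    obtain z vs where z: "z \<longlonglongrightarrow> p k" "\<forall>j. z j \<in> S"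
      and vs: "vs \<longlonglongrightarrow> v k" "\<forall>j. vs j \<in> reg_normal_cone S (z j)"
      using assms(3)[of k] unfolding lim_normal_cone_def by blast
    have "\<forall>\<^sub>F j in sequentially. dist (z j) (p k) < 1 / real (Suc k)"
      using z(1) by (rule tendstoD) simp
    moreover have "\<forall>\<^sub>F j in sequentially. dist (vs j) (v k) < 1 / real (Suc k)"
      using vs(1) by (rule tendstoD) simp
    ultimately obtain j
      where "dist (z j) (p k) < 1 / real (Suc k)" "dist (vs j) (v k) < 1 / real (Suc k)"
      using eventually_happens'[OF sequentially_bot eventually_conj] by blast
    then show ?thesis
      using z(2) vs(2) by (auto simp: dist_norm)
  qed
  obtain q u where qu: "\<forall>k. q k \<in> S \<and> u k \<in> reg_normal_cone S (q k)
      \<and> norm (q k - p k) < 1 / real (Suc k) \<and> norm (u k - v k) < 1 / real (Suc k)"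
    using approx by metis
  have "q \<longlonglongrightarrow> p0"
    using Lim_transform[OF assms(1) LIMSEQ_norm_0] qu by blast
  moreover have "u \<longlonglongrightarrow> v0"
    using Lim_transform[OF assms(2) LIMSEQ_norm_0] qu by blast
  ultimately show ?thesis
    unfolding lim_normal_cone_def using qu by blast
qed

lemma lipschitz_graph_increment:
  fixes g :: "'a::real_inner \<Rightarrow> 'b::real_inner"
  assumes lip: "L-lipschitz_on U g" and "y \<in> U" "y + t *\<^sub>R a \<in> U" "t > 0" "a \<noteq> 0"
    and h_def: "h = (y + t *\<^sub>R a, g (y + t *\<^sub>R a)) - (y, g y)"
  shows "0 < norm h" "norm h \<le> t * norm a * (1 + L)"
    and "t * norm a * (norm a - L * norm b) \<le> (a, b) \<bullet> h"
proof -
  define d where "d = g (y + t *\<^sub>R a) - g y"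
  have h: "h = (t *\<^sub>R a, d)"
    by (simp add: h_def d_def)
  have "norm d \<le> L * (t * norm a)"
    using lipschitz_on_normD[OF lip assms(3,2)] \<open>t > 0\<close> by (simp add: d_def)
  have "0 < t * norm a"
    using \<open>t > 0\<close> \<open>a \<noteq> 0\<close> by simp
  also have "\<dots> \<le> norm h"
    using norm_fst_le[of "t *\<^sub>R a" d] \<open>t > 0\<close> by (simp add: h)
  finally show "0 < norm h" .
  show "norm h \<le> t * norm a * (1 + L)"
    using norm_Pair_le[of "t *\<^sub>R a" d] \<open>norm d \<le> L * (t * norm a)\<close> \<open>t > 0\<close>
    by (simp add: h algebra_simps)
  have "(a, b) \<bullet> h = t * (norm a)\<^sup>2 + b \<bullet> d"
    by (simp add: h power2_norm_eq_inner)
  moreover have "- (b \<bullet> d) \<le> norm b * norm d"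
    using Cauchy_Schwarz_ineq2[of b d] by linarith
  moreover have "norm b * norm d \<le> norm b * (L * (t * norm a))"
    using \<open>norm d \<le> L * (t * norm a)\<close> by (rule mult_left_mono) simp
  ultimately show "t * norm a * (norm a - L * norm b) \<le> (a, b) \<bullet> h"
    by (simp add: algebra_simps power2_eq_square)
qed

lemma reg_normal_cone_graph_lipschitz:
  fixes g :: "'a::real_inner \<Rightarrow> 'b::real_inner"
  assumes "open U" "y \<in> U" and lip: "L-lipschitz_on U g"
    and normal: "(a, b) \<in> reg_normal_cone (graph (\<lambda>x. {g x})) (y, g y)"
  shows "norm a \<le> L * norm b"
proof (cases "a = 0")
  case True
  then show ?thesis
    using lipschitz_on_nonneg[OF lip] by simp
next
  case False
  have "L \<ge> 0"
    using lip by (rule lipschitz_on_nonneg)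
  have "norm a - L * norm b \<le> \<epsilon>" if "\<epsilon> > 0" for \<epsilon>
  proof -
    have "\<epsilon> / (1 + L) > 0"
      using \<open>\<epsilon> > 0\<close> \<open>L \<ge> 0\<close> by simp
    then obtain \<delta> where "\<delta> > 0" and \<delta>: "\<forall>z\<in>graph (\<lambda>x. {g x}).
        0 < norm (z - (y, g y)) \<and> norm (z - (y, g y)) < \<delta> \<longrightarrow>
        (a, b) \<bullet> (z - (y, g y)) \<le> \<epsilon> / (1 + L) * norm (z - (y, g y))"
      using normal unfolding reg_normal_cone_def by blast
    (* test the defining inequality at the points of the graph over y + t a, small t > 0 *)
    have "((\<lambda>t. y + t *\<^sub>R a) \<longlongrightarrow> y) (at_right 0)"
      by (auto intro!: tendsto_eq_intros)
    then have "\<forall>\<^sub>F t in at_right 0. y + t *\<^sub>R a \<in> U"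
      using \<open>open U\<close> \<open>y \<in> U\<close> by (rule topological_tendstoD)
    moreover have "((\<lambda>t. t * norm a * (1 + L)) \<longlongrightarrow> 0) (at_right 0)"
      by (auto intro!: tendsto_eq_intros)
    then have "\<forall>\<^sub>F t in at_right 0. t * norm a * (1 + L) < \<delta>"
      using \<open>\<delta> > 0\<close> by (rule order_tendstoD)
    ultimately obtain t where t: "0 < t" "y + t *\<^sub>R a \<in> U" "t * norm a * (1 + L) < \<delta>"
      using eventually_happens'[OF trivial_limit_at_right_real
          eventually_conj[OF eventually_at_right_less eventually_conj]] by blast
    define h where "h = (y + t *\<^sub>R a, g (y + t *\<^sub>R a)) - (y, g y)"
    note increment = lipschitz_graph_increment[OF lip \<open>y \<in> U\<close> t(2,1) False h_def]
    have "(y + t *\<^sub>R a, g (y + t *\<^sub>R a)) \<in> graph (\<lambda>x. {g x})"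
      by (simp add: graph_def)
    then have "(a, b) \<bullet> h \<le> \<epsilon> / (1 + L) * norm h"
      using \<delta> increment(1,2) t(3) unfolding h_def by force
    also have "\<dots> \<le> \<epsilon> / (1 + L) * (t * norm a * (1 + L))"
      by (rule mult_left_mono[OF increment(2) less_imp_le]) fact
    also have "\<dots> = t * norm a * \<epsilon>"
      using \<open>L \<ge> 0\<close> by simp
    finally have "t * norm a * (norm a - L * norm b) \<le> t * norm a * \<epsilon>"
      using increment(3)[of b] by linarith
    moreover have "0 < t * norm a"
      using t(1) False by simp
    ultimately show ?thesis
      by (rule mult_left_le_imp_le)
  qed
  then show ?thesis
    using field_le_epsilon[of "norm a" "L * norm b"] by fastforce
qed

lemma lim_normal_cone_graph_lipschitz:
  fixes g :: "'a::real_inner \<Rightarrow> 'b::real_inner"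
  assumes "open U" "x \<in> U" "L-lipschitz_on U g"
    and "(a, b) \<in> lim_normal_cone (graph (\<lambda>x. {g x})) (x, g x)"
  shows "norm a \<le> L * norm b"
proof -
  obtain z vs where z: "z \<longlonglongrightarrow> (x, g x)" "\<forall>k. z k \<in> graph (\<lambda>x. {g x})"
    and vs: "vs \<longlonglongrightarrow> (a, b)" "\<forall>k. vs k \<in> reg_normal_cone (graph (\<lambda>x. {g x})) (z k)"
    using assms(4) unfolding lim_normal_cone_def by blast
  have "\<forall>\<^sub>F k in sequentially. fst (z k) \<in> U"
    using topological_tendstoD[OF tendsto_fst[OF z(1)]] assms(1,2) by simp
  then have bound: "\<forall>\<^sub>F k in sequentially. norm (fst (vs k)) \<le> L * norm (snd (vs k))"
  proof (rule eventually_mono)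
    fix k
    assume "fst (z k) \<in> U"
    have "z k = (fst (z k), g (fst (z k)))"
      using z(2)[rule_format, of k] by (cases "z k") (simp add: graph_def)
    then have "(fst (vs k), snd (vs k)) \<in> reg_normal_cone (graph (\<lambda>x. {g x})) (fst (z k), g (fst (z k)))"
      using vs(2) by simp
    then show "norm (fst (vs k)) \<le> L * norm (snd (vs k))"
      by (rule reg_normal_cone_graph_lipschitz[OF assms(1) \<open>fst (z k) \<in> U\<close> assms(3)])
  qed
  have "(\<lambda>k. L * norm (snd (vs k))) \<longlonglongrightarrow> L * norm b"
    using tendsto_mult_left[OF tendsto_norm[OF tendsto_snd[OF vs(1)]]] by simp
  moreover have "(\<lambda>k. norm (fst (vs k))) \<longlonglongrightarrow> norm a"
    using tendsto_norm[OF tendsto_fst[OF vs(1)]] by simp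
  ultimately show ?thesis
    using bound by (rule tendsto_le[OF sequentially_bot])
qed

lemma second_subdiff_scaleR:
  assumes "z \<in> second_subdiff \<phi> x w" "c > 0"
  shows "c *\<^sub>R z \<in> second_subdiff \<phi> x (c *\<^sub>R w)"
  using lim_normal_cone_scaleR[of "(z, - w)" _ _ c] assms
  by (simp add: second_subdiff_def coderiv_def)

lemma second_subdiff_norm_le:
  assumes "open U" "x \<in> U" "L-lipschitz_on U (grad \<phi>)" "z \<in> second_subdiff \<phi> x w"
  shows "norm z \<le> L * norm w"
  using lim_normal_cone_graph_lipschitz[OF assms(1-3), of z "- w"] assms(4)
  by (simp add: second_subdiff_def coderiv_def)

lemma second_subdiff_closed_graph:
  assumes "isCont (grad \<phi>) x" "xs \<longlonglongrightarrow> x" "zs \<longlonglongrightarrow> z" "ws \<longlonglongrightarrow> w"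
    and "\<And>k. zs k \<in> second_subdiff \<phi> (xs k) (ws k)"
  shows "z \<in> second_subdiff \<phi> x w"
proof -
  have "(\<lambda>k. (xs k, grad \<phi> (xs k))) \<longlonglongrightarrow> (x, grad \<phi> x)"
    using tendsto_Pair[OF assms(2) isCont_tendsto_compose[OF assms(1,2)]] .
  moreover have "(\<lambda>k. (zs k, - ws k)) \<longlonglongrightarrow> (z, - w)"
    using tendsto_Pair[OF assms(3) tendsto_minus[OF assms(4)]] .
  moreover have "(zs k, - ws k) \<in> lim_normal_cone (graph (\<lambda>y. {grad \<phi> y})) (xs k, grad \<phi> (xs k))" for k
    using assms(5)[of k] by (simp add: second_subdiff_def coderiv_def)
  ultimately have "(z, - w) \<in> lim_normal_cone (graph (\<lambda>y. {grad \<phi> y})) (x, grad \<phi> x)"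
    by (rule lim_normal_cone_closed_graph)
  then show ?thesis
    by (simp add: second_subdiff_def coderiv_def)
qed

lemma compact_second_subdiff_sphere:
  assumes "C11 \<phi>" "compact \<Omega>"
  shows "compact {(x, z, w). x \<in> \<Omega> \<and> norm w = 1 \<and> z \<in> second_subdiff \<phi> x w}"
    (is "compact ?K")
proof -
  have cont: "isCont (grad \<phi>) x" for x
    using assms(1) by (simp add: C11_def continuous_on_eq_continuous_at)
  obtain U L where "open U" "\<Omega> \<subseteq> U" and lip: "L-lipschitz_on U (grad \<phi>)"
    using lipschitz_on_neighbourhood_of_compact[OF assms(2)] assms(1) unfolding C11_def by metis
  have "?K \<subseteq> \<Omega> \<times> cball 0 L \<times> cball 0 1"
    using second_subdiff_norm_le[OF \<open>open U\<close> _ lip] \<open>\<Omega> \<subseteq> U\<close> by fastforce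
  moreover have "bounded (\<Omega> \<times> cball 0 L \<times> cball (0::'a) 1)"
    using assms(2) by (intro bounded_Times compact_imp_bounded bounded_cball)
  ultimately have "bounded ?K"
    by (rule bounded_subset[rotated])
  moreover have "closed ?K"
    unfolding closed_sequential_limits
  proof (intro allI impI, elim conjE)
    fix s l
    assume s: "\<forall>n. s n \<in> ?K" "s \<longlonglongrightarrow> l"
    obtain x z w where l: "l = (x, z, w)"
      by (cases l)
    have xs: "(\<lambda>n. fst (s n)) \<longlonglongrightarrow> x"
      using tendsto_fst[OF s(2)] by (simp add: l)
    have zs: "(\<lambda>n. fst (snd (s n))) \<longlonglongrightarrow> z"
      using tendsto_fst[OF tendsto_snd[OF s(2)]] by (simp add: l)
    have ws: "(\<lambda>n. snd (snd (s n))) \<longlonglongrightarrow> w"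
      using tendsto_snd[OF tendsto_snd[OF s(2)]] by (simp add: l)
    have "x \<in> \<Omega>"
      using closed_sequentially[OF compact_imp_closed[OF assms(2)] _ xs] s(1)
      by (auto simp: split_beta)
    moreover have "w \<in> sphere 0 1"
      using closed_sequentially[OF closed_sphere[of 0 1] _ ws] s(1) by (auto simp: split_beta)
    moreover have "z \<in> second_subdiff \<phi> x w"
      using second_subdiff_closed_graph[OF cont xs zs ws] s(1) by (auto simp: split_beta)
    ultimately show "l \<in> ?K"
      by (simp add: l)
  qed
  ultimately show ?thesis
    by (simp add: compact_eq_bounded_closed)
qed

lemma second_subdiff_inner_ge_from_sphere:
  assumes "\<And>w z. norm w = 1 \<Longrightarrow> z \<in> second_subdiff \<phi> x w \<Longrightarrow> \<kappa> \<le> z \<bullet> w"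
    and "z \<in> second_subdiff \<phi> x w"
  shows "\<kappa> * (norm w)\<^sup>2 \<le> z \<bullet> w"
proof (cases "w = 0")
  case True
  then show ?thesis
    by simp
next
  case False
  define c where "c = 1 / norm w"
  have "c > 0"
    using False by (simp add: c_def)
  have "\<kappa> \<le> (c *\<^sub>R z) \<bullet> (c *\<^sub>R w)"
    using assms(1)[OF _ second_subdiff_scaleR[OF assms(2) \<open>c > 0\<close>]] False by (simp add: c_def)
  also have "\<dots> = (z \<bullet> w) / (norm w)\<^sup>2"
    by (simp add: c_def power2_eq_square)
  finally show ?thesis
    using False by (simp add: field_simps)
qed

theorem lemma3p6:
  fixes \<phi> :: "'a::euclidean_space \<Rightarrow> real" and x0 :: 'a
  assumes "C11 \<phi>"
    and "\<forall>x\<in>{x. \<phi> x \<le> \<phi> x0}. \<forall>u z. u \<noteq> 0 \<and> z \<in> second_subdiff \<phi> x u \<longrightarrow> z \<bullet> u > 0"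
    and "bounded {x. \<phi> x \<le> \<phi> x0}"
  shows "\<exists>\<kappa>>0. \<forall>x\<in>{x. \<phi> x \<le> \<phi> x0}. \<forall>w z. z \<in> second_subdiff \<phi> x w \<longrightarrow>
            z \<bullet> w \<ge> \<kappa> * (norm w)\<^sup>2"
proof -
  define \<Omega> where "\<Omega> = {x. \<phi> x \<le> \<phi> x0}"
  define K where "K = {(x, z, w). x \<in> \<Omega> \<and> norm w = 1 \<and> z \<in> second_subdiff \<phi> x w}"
  have "continuous_on UNIV \<phi>"
    using assms(1) unfolding C11_def
    by (meson continuous_at_imp_continuous_on has_derivative_continuous)
  then have "compact \<Omega>"
    using assms(3) by (simp add: \<Omega>_def compact_eq_bounded_closed closed_Collect_le)
  then have "compact K"
    unfolding K_def using assms(1) by (rule compact_second_subdiff_sphere[rotated])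
  moreover have "continuous_on K (\<lambda>(x, z, w). z \<bullet> w)"
    by (simp add: case_prod_beta') (intro continuous_intros)
  moreover have "(\<lambda>(x, z, w). z \<bullet> w) p > 0" if "p \<in> K" for p
    using that assms(2) by (auto simp: K_def \<Omega>_def) (metis norm_zero zero_neq_one)
  ultimately obtain \<kappa> where "\<kappa> > 0" "\<And>x z w. (x, z, w) \<in> K \<Longrightarrow> \<kappa> \<le> z \<bullet> w"
    by (rule compact_positive_lower_bound) auto
  then show ?thesis
    unfolding \<Omega>_def[symmetric]
    by (auto intro!: exI[of _ \<kappa>] second_subdiff_inner_ge_from_sphere simp: K_def)
qed

end
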